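(* Let $\mathbf{C}$ be the Cantor set with a fixed compatible metric $\mathrm{dist}$, let $X \subset \mathbf{C}$, and let $f : X \to Y$ be a clopen-LC function from $X$ onto a separable metrizable space $Y$ such that $f^{-1}(y)$ is compact for every $y \in Y$. For $n = 1,2,\dots$, let $X_n$ be the union of all fibers $f^{-1}(y)$, $y \in Y$, for which there exist a sequence $y_k \to y$ in $Y$ with $y_k \neq y$ for all $k$ and $y_k \neq y_j$ for $k\ne j$, points $x_k \in f^{-1}(y_k)$, and a point $\tilde{x}_y \in \mathbf{C}$ with $x_k \to \tilde{x}_y$ and $\mathrm{dist}(\tilde{x}_y, f^{-1}(y)) > 1/n$; let $Y_n = f(X_n)$. Let $Y_0 = Y \setminus \bigcup_{n\ge 1} Y_n$ and $X_0 = f^{-1}(Y_0)$. Then $f|_{X_0} : X_0 \to Y_0$ is a closed function.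
   Context: All spaces are separable metrizable. A subset of a topological space is an LC-set if it is the intersection of an open set and a closed set. A function is closed if it maps closed sets to closed sets of its image space. A function $f : X \to Y$ is clopen-LC if for every subset $U \subset X$ that is clopen in $X$, the image $f(U)$ is an LC-set in $Y$. *)

theory Defs
  imports "HOL-Analysis.Analysis"
begin

definition cantor_set :: "real set" where
  "cantor_set = {x. \<exists>d::nat \<Rightarrow> nat. (\<forall>n. d n \<in> {0, 2}) \<and>
                      (\<lambda>n. real (d n) / 3 ^ Suc n) sums x}"

definition lc_set :: "'b::topological_space set \<Rightarrow> 'b set \<Rightarrow> bool" where
  "lc_set Y A \<longleftrightarrow> (\<exists>U F. openin (top_of_set Y) U \<and> closedin (top_of_set Y) F \<and> A = U \<inter> F)"

definition clopen_LC :: "('a::topological_space \<Rightarrow> 'b::topological_space) \<Rightarrow> 'a set \<Rightarrow> 'b set \<Rightarrow> bool" where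
  "clopen_LC f X Y \<longleftrightarrow>
     (\<forall>U. openin (top_of_set X) U \<and> closedin (top_of_set X) U \<longrightarrow> lc_set Y (f ` U))"

definition closed_fun :: "('a::topological_space \<Rightarrow> 'b::topological_space) \<Rightarrow> 'a set \<Rightarrow> 'b set \<Rightarrow> bool" where
  "closed_fun f X Y \<longleftrightarrow>
     (\<forall>F. closedin (top_of_set X) F \<longrightarrow> closedin (top_of_set Y) (f ` F))"

definition X_n :: "'a::metric_space set \<Rightarrow> ('a \<Rightarrow> 'b::metric_space) \<Rightarrow> 'a set \<Rightarrow> 'b set \<Rightarrow> nat \<Rightarrow> 'a set" where
  "X_n C f X Y n = \<Union> {{x \<in> X. f x = y} | y. y \<in> Y \<and>
      (\<exists>yk :: nat \<Rightarrow> 'b. (\<forall>k. yk k \<in> Y) \<and> yk \<longlonglongrightarrow> y \<and> (\<forall>k. yk k \<noteq> y) \<and> inj yk \<and>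
        (\<exists>xk :: nat \<Rightarrow> 'a. (\<forall>k. xk k \<in> X \<and> f (xk k) = yk k) \<and>
          (\<exists>xt \<in> C. xk \<longlonglongrightarrow> xt \<and> infdist xt {x \<in> X. f x = y} > 1 / real n)))}"

definition Y_n :: "'a::metric_space set \<Rightarrow> ('a \<Rightarrow> 'b::metric_space) \<Rightarrow> 'a set \<Rightarrow> 'b set \<Rightarrow> nat \<Rightarrow> 'b set" where
  "Y_n C f X Y n = f ` X_n C f X Y n"

definition Y_0 :: "'a::metric_space set \<Rightarrow> ('a \<Rightarrow> 'b::metric_space) \<Rightarrow> 'a set \<Rightarrow> 'b set \<Rightarrow> 'b set" where
  "Y_0 C f X Y = Y - (\<Union>n\<in>{1..}. Y_n C f X Y n)"

definition X_0 :: "'a::metric_space set \<Rightarrow> ('a \<Rightarrow> 'b::metric_space) \<Rightarrow> 'a set \<Rightarrow> 'b set \<Rightarrow> 'a set" where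
  "X_0 C f X Y = {x \<in> X. f x \<in> Y_0 C f X Y}"

end

theory Submission imports Defs begin

(*
  Let F be closed in X_0 and let y \<in> Y_0 be a limit point of f ` F.
  Choose an injective sequence y_k \<rightarrow> y in f ` F with y_k \<noteq> y and preimages x_k \<in> F.
  Since C is a copy of the Cantor set, C is compact, so a subsequence of (x_k)
  converges to some point x~ \<in> C.  Because y lies in no Y_n, the distance from x~
  to the fiber f^{-1}(y) is at most 1/n for every n \<ge> 1 (otherwise that very
  subsequence would witness y \<in> Y_n); as the fiber is compact, x~ lies in it.
*)

definition ternary_value :: "(nat \<Rightarrow> real) \<Rightarrow> real" where
  "ternary_value d = (\<Sum>n. d n / 3 ^ Suc n)"

definition cantor_digits :: "(nat \<Rightarrow> real) set" where
  "cantor_digits = PiE UNIV (\<lambda>_. {0, 2})"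

lemma cantor_digit_term_bound:
  assumes "d \<in> cantor_digits"
  shows "norm (d n / 3 ^ Suc n) \<le> 2 / 3 ^ Suc n"
proof -
  have "d n = 0 \<or> d n = 2" using assms by (auto simp: cantor_digits_def PiE_iff)
  thus ?thesis by auto
qed

lemma summable_cantor_bound: "summable (\<lambda>n. 2 / (3::real) ^ Suc n)"
proof -
  have "summable (\<lambda>n. (2/3) * (1/(3::real)) ^ n)"
    by (intro summable_mult summable_geometric) auto
  thus ?thesis by (simp add: power_divide field_simps)
qed

lemma compact_cantor_digits: "compact cantor_digits"
proof -
  have "compactin (product_topology (\<lambda>i. euclidean) UNIV) cantor_digits"
    unfolding cantor_digits_def by (subst compactin_PiE) auto
  thus ?thesis by (simp add: euclidean_product_topology compactin_euclidean_iff)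
qed

text \<open>By the Weierstrass M-test the partial sums converge uniformly, and each partial
  sum depends continuously on finitely many coordinates.\<close>
lemma continuous_on_ternary_value: "continuous_on cantor_digits ternary_value"
proof -
  have ul: "uniform_limit cantor_digits (\<lambda>n d. \<Sum>i<n. d i / 3 ^ Suc i) ternary_value sequentially"
    unfolding ternary_value_def
    by (rule Weierstrass_m_test[OF cantor_digit_term_bound summable_cantor_bound])
  have coord: "continuous_on cantor_digits (\<lambda>d::nat\<Rightarrow>real. d i)" for i
    by (rule continuous_on_product_then_coordinatewise[OF continuous_on_id])
  have "continuous_on cantor_digits (\<lambda>d. \<Sum>i<n. d i / 3 ^ Suc i)" for n
    using coord by (intro continuous_on_sum continuous_on_divide continuous_on_const) auto
  thus ?thesis by (intro uniform_limit_theorem[OF _ ul]) simp_all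
qed

lemma cantor_set_eq_image: "cantor_set = ternary_value ` cantor_digits"
proof
  show "cantor_set \<subseteq> ternary_value ` cantor_digits"
  proof
    fix x assume "x \<in> cantor_set"
    then obtain d :: "nat \<Rightarrow> nat"
      where d: "\<forall>n. d n \<in> {0,2}" "(\<lambda>n. real (d n) / 3 ^ Suc n) sums x"
      unfolding cantor_set_def by blast
    have "(\<lambda>n. real (d n)) \<in> cantor_digits" using d(1) by (force simp: cantor_digits_def)
    moreover have "x = ternary_value (\<lambda>n. real (d n))"
      using d(2) by (simp add: ternary_value_def sums_iff)
    ultimately show "x \<in> ternary_value ` cantor_digits" by blast
  qed
  show "ternary_value ` cantor_digits \<subseteq> cantor_set"
  proof
    fix x assume "x \<in> ternary_value ` cantor_digits"
    then obtain e where e: "e \<in> cantor_digits" "x = ternary_value e" by blast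
    define d :: "nat \<Rightarrow> nat" where "d = (\<lambda>n. if e n = 0 then 0 else 2)"
    have de: "real (d n) = e n" for n
      using e(1) by (auto simp: cantor_digits_def d_def PiE_iff)
    have "summable (\<lambda>n. e n / 3 ^ Suc n)"
      using cantor_digit_term_bound[OF e(1)]
      by (intro summable_comparison_test[OF _ summable_cantor_bound]) auto
    hence "(\<lambda>n. real (d n) / 3 ^ Suc n) sums x"
      using e by (simp add: de ternary_value_def summable_sums)
    moreover have "\<forall>n. d n \<in> {0,2}" by (simp add: d_def)
    ultimately show "x \<in> cantor_set" unfolding cantor_set_def by blast
  qed
qed

lemma compact_cantor_set: "compact cantor_set"
  unfolding cantor_set_eq_image
  using compact_continuous_image[OF continuous_on_ternary_value compact_cantor_digits] .

text \<open>If the fiber over y is nonempty and \<open>y \<notin> Y_n\<close>, then every limit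
  in C of preimages of an injective sequence converging to y (and
  avoiding it) lies within distance \<open>1/n\<close> of the fiber: otherwise these
  sequences would witness that the fiber is part of X_n.\<close>
lemma infdist_fiber_le_if_not_in_Y_n:
  assumes "y \<in> Y" and "x0 \<in> X" and "f x0 = y" and "y \<notin> Y_n C f X Y n"
    and "\<forall>k. yk k \<in> Y" and "yk \<longlonglongrightarrow> y" and "\<forall>k. yk k \<noteq> y" and "inj yk"
    and "\<forall>k. xk k \<in> X \<and> f (xk k) = yk k"
    and "xt \<in> C" and "xk \<longlonglongrightarrow> xt"
  shows "infdist xt {x \<in> X. f x = y} \<le> 1 / real n"
proof (rule ccontr)
  assume "\<not> ?thesis"
  hence "\<exists>yk. (\<forall>k. yk k \<in> Y) \<and> yk \<longlonglongrightarrow> y \<and> (\<forall>k. yk k \<noteq> y) \<and> inj yk \<and>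
          (\<exists>xk. (\<forall>k. xk k \<in> X \<and> f (xk k) = yk k) \<and>
            (\<exists>xt \<in> C. xk \<longlonglongrightarrow> xt \<and> infdist xt {x \<in> X. f x = y} > 1 / real n))"
    using assms(5-11) by (intro exI[of _ yk] conjI exI[of _ xk] bexI[of _ xt]) auto
  hence "{x \<in> X. f x = y} \<subseteq> X_n C f X Y n"
    unfolding X_n_def by (intro Union_upper CollectI exI[of _ y]) (simp add: assms(1))
  hence "y \<in> Y_n C f X Y n"
    using assms(2,3) unfolding Y_n_def by (intro image_eqI[of y f x0]) auto
  with assms(4) show False ..
qed

text \<open>For \<open>y \<in> Y_0\<close> the bound holds for all \<open>n \<ge> 1\<close>, so the limit point
  has distance zero from the fiber; the fiber being closed, it contains the limit.\<close>
lemma limit_in_fiber_over_Y_0: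
  assumes "y \<in> Y_0 C f X Y" and "f ` X = Y" and "closed {x \<in> X. f x = y}"
    and "\<forall>k. yk k \<in> Y" and "yk \<longlonglongrightarrow> y" and "\<forall>k. yk k \<noteq> y" and "inj yk"
    and "\<forall>k. xk k \<in> X \<and> f (xk k) = yk k"
    and "xt \<in> C" and "xk \<longlonglongrightarrow> xt"
  shows "xt \<in> {x \<in> X. f x = y}"
proof -
  let ?fib = "{x \<in> X. f x = y}"
  have "y \<in> Y" using assms(1) by (simp add: Y_0_def)
  then obtain x0 where x0: "x0 \<in> X" "f x0 = y" using assms(2) by blast
  have bound: "infdist xt ?fib \<le> 1 / real (Suc n)" for n
  proof (rule infdist_fiber_le_if_not_in_Y_n[OF \<open>y \<in> Y\<close> x0 _ assms(4-10)])
    show "y \<notin> Y_n C f X Y (Suc n)" using assms(1) by (auto simp: Y_0_def)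
  qed
  have zero: "infdist xt ?fib = 0"
  proof (rule ccontr)
    assume "infdist xt ?fib \<noteq> 0"
    hence "infdist xt ?fib > 0" using infdist_nonneg[of xt ?fib] by linarith
    then obtain n where "1 / real (Suc n) < infdist xt ?fib" using nat_approx_posE by blast
    with bound[of n] show False by simp
  qed
  have nonempty: "?fib \<noteq> {}" using x0 by blast
  show "xt \<in> ?fib"
    using in_closed_iff_infdist_zero[OF assms(3) nonempty, of xt] zero by (rule iffD2)
qed

lemma limpt_image_lift_convergent:
  fixes f :: "'a::metric_space \<Rightarrow> 'b::metric_space"
  assumes "compact C" and "F \<subseteq> C" and "y islimpt f ` F"
  obtains yk xk xt where "\<forall>k. yk k \<in> f ` F - {y}" and "inj yk" and "yk \<longlonglongrightarrow> y"
    and "\<forall>k. xk k \<in> F \<and> f (xk k) = yk k" and "xt \<in> C" and "xk \<longlonglongrightarrow> xt"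
proof -
  obtain z where z: "\<forall>k. z k \<in> f ` F - {y}" "inj z" "z \<longlonglongrightarrow> y"
    using limpt_sequential_inj[THEN iffD1, OF assms(3)] by blast
  have "z k \<in> f ` F" for k using z(1) by blast
  hence "\<forall>k. \<exists>x. x \<in> F \<and> f x = z k" by (metis imageE)
  then obtain x where x: "\<forall>k. x k \<in> F \<and> f (x k) = z k" by metis
  hence "\<forall>k. x k \<in> C" using assms(2) by blast
  then obtain xt r where xt: "xt \<in> C" "strict_mono r" "(x \<circ> r) \<longlonglongrightarrow> xt"
    using compact_imp_seq_compact[OF assms(1)] unfolding seq_compact_def by metis
  show ?thesis
  proof (rule that[of "z \<circ> r" "x \<circ> r" xt])
    show "\<forall>k. (z \<circ> r) k \<in> f ` F - {y}" using z(1) by simp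
    show "inj (z \<circ> r)" using z(2) xt(2) by (metis inj_compose strict_mono_imp_inj_on)
    show "(z \<circ> r) \<longlonglongrightarrow> y" using z(3) xt(2) by (rule LIMSEQ_subseq_LIMSEQ)
    show "\<forall>k. (x \<circ> r) k \<in> F \<and> f ((x \<circ> r) k) = (z \<circ> r) k" using x by simp
  qed (use xt in auto)
qed

theorem lemma2:
  fixes C :: "'a::metric_space set" and X :: "'a set"
    and f :: "'a \<Rightarrow> 'b::metric_space" and Y :: "'b set"
  assumes "C homeomorphic cantor_set"
    and "X \<subseteq> C"
    and "separable_space (top_of_set Y)"
    and "f ` X = Y"
    and "clopen_LC f X Y"
    and "\<forall>y\<in>Y. compact {x \<in> X. f x = y}"
  shows "closed_fun f (X_0 C f X Y) (Y_0 C f X Y)"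
  unfolding closed_fun_def
proof (intro allI impI)
  fix F assume F: "closedin (top_of_set (X_0 C f X Y)) F"
  then obtain K where K: "closed K" "F = X_0 C f X Y \<inter> K" by (metis closedin_closed)
  have FX: "F \<subseteq> X" and fF: "f ` F \<subseteq> Y_0 C f X Y"
    using closedin_imp_subset[OF F] by (auto simp: X_0_def)
  have "compact C" using assms(1) compact_cantor_set homeomorphic_compactness by blast
  show "closedin (top_of_set (Y_0 C f X Y)) (f ` F)"
    unfolding closedin_limpt
  proof (intro conjI fF allI impI, elim conjE)
    fix y assume lim: "y islimpt f ` F" and yY0: "y \<in> Y_0 C f X Y"
    obtain yk xk xt where seq: "\<forall>k. yk k \<in> f ` F - {y}" "inj yk" "yk \<longlonglongrightarrow> y"
      "\<forall>k. xk k \<in> F \<and> f (xk k) = yk k" "xt \<in> C" "xk \<longlonglongrightarrow> xt"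
      using limpt_image_lift_convergent[OF \<open>compact C\<close> _ lim] FX assms(2) by blast
    have "closed {x \<in> X. f x = y}"
      using assms(6) yY0 by (simp add: Y_0_def compact_imp_closed)
    moreover have "\<forall>k. yk k \<in> Y" using seq(1) image_mono[OF FX, of f] assms(4) by auto
    moreover have "\<forall>k. yk k \<noteq> y" using seq(1) by simp
    moreover have "\<forall>k. xk k \<in> X \<and> f (xk k) = yk k" using seq(4) FX by auto
    ultimately have "xt \<in> {x \<in> X. f x = y}"
      using limit_in_fiber_over_Y_0[OF yY0 assms(4)] seq by blast
    hence "xt \<in> X_0 C f X Y" and fxt: "f xt = y" using yY0 by (simp_all add: X_0_def)
    moreover have "xt \<in> K" using closed_sequentially[OF K(1) _ seq(6)] seq(4) K(2) by auto
    ultimately show "y \<in> f ` F" using K(2) fxt by blast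
  qed
qed

end
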